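(* Let $\Phi(\omega)=\frac{\alpha\omega+\beta}{\gamma\omega+\delta}$ with $\alpha,\beta,\gamma,\delta\in\mathbb{R}$, $\alpha\delta-\beta\gamma=1$, and let $R$ be a real rational function such that $\Phi\circ R$ is a rational function (i.e. $R$ is not the constant $-\delta/\gamma$). Then $$\operatorname{Ind}_{\mathbb{P}\mathbb{R}}(\Phi\circ R)=\operatorname{Ind}_{\mathbb{P}\mathbb{R}}(R).$$
   Context: For a real rational function $R$ and a real pole $\omega_0$ of $R$ of odd order, $\operatorname{Ind}_{\omega_0}(R)=+1$ if $R(\omega_0-0)<0<R(\omega_0+0)$ and $-1$ if $R(\omega_0-0)>0>R(\omega_0+0)$; $\operatorname{Ind}_{-\infty}^{+\infty}(R)$ is the sum of these over all real poles of $R$ of odd order. Writing $R=f_1/f_0$, $R$ has a pole at $\infty$ of order $\deg f_1-\deg f_0$ when this is positive; if this order is odd, $\operatorname{Ind}_\infty(R)=+1$ if $R(+\infty)<0<R(-\infty)$ and $-1$ if $R(+\infty)>0>R(-\infty)$; otherwise $\operatorname{Ind}_\infty(R)=0$. Then $\operatorname{Ind}_{\mathbb{P}\mathbb{R}}(R)=\operatorname{Ind}_{-\infty}^{+\infty}(R)+\operatorname{Ind}_\infty(R)$ (constants have index $0$). *)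

theory Defs
  imports Complex_Main "HOL-Computational_Algebra.Polynomial"
begin

text \<open>A real rational function R is represented as a pair of real polynomials
  (f1, f0) with f0 \<noteq> 0, meaning R = f1/f0.  All notions below are independent
  of the chosen representation.\<close>

definition ratfun :: "real poly \<Rightarrow> real poly \<Rightarrow> real \<Rightarrow> real" where
  "ratfun f1 f0 = (\<lambda>t. poly f1 t / poly f0 t)"

definition odd_real_pole :: "real poly \<Rightarrow> real poly \<Rightarrow> real \<Rightarrow> bool" where
  "odd_real_pole f1 f0 x \<longleftrightarrow> f1 \<noteq> 0 \<and> order x f1 < order x f0 \<and> odd (order x f0 - order x f1)"

definition ind_at :: "real poly \<Rightarrow> real poly \<Rightarrow> real \<Rightarrow> int" where
  "ind_at f1 f0 x =
     (if odd_real_pole f1 f0 x then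
        (if filterlim (ratfun f1 f0) at_bot (at_left x) \<and> filterlim (ratfun f1 f0) at_top (at_right x) then 1
         else if filterlim (ratfun f1 f0) at_top (at_left x) \<and> filterlim (ratfun f1 f0) at_bot (at_right x) then -1
         else 0)
      else 0)"

definition ind_line :: "real poly \<Rightarrow> real poly \<Rightarrow> int" where
  "ind_line f1 f0 = (\<Sum>x\<in>{x. poly f0 x = 0}. ind_at f1 f0 x)"

text \<open>Index at infinity: pole of order deg f1 - deg f0 when positive.\<close>
definition ind_inf :: "real poly \<Rightarrow> real poly \<Rightarrow> int" where
  "ind_inf f1 f0 =
     (if degree f0 < degree f1 \<and> odd (degree f1 - degree f0) then
        (if filterlim (ratfun f1 f0) at_bot at_top \<and> filterlim (ratfun f1 f0) at_top at_bot then 1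
         else if filterlim (ratfun f1 f0) at_top at_top \<and> filterlim (ratfun f1 f0) at_bot at_bot then -1
         else 0)
      else 0)"

definition ind_PR :: "real poly \<Rightarrow> real poly \<Rightarrow> int" where
  "ind_PR f1 f0 = ind_line f1 f0 + ind_inf f1 f0"

end

theory Submission
  imports Defs
begin

text \<open>For \<open>\<gamma> \<noteq> 0\<close> the Moebius map is \<open>\<Phi>(\<omega>) = \<alpha>/\<gamma> - 1/(\<gamma>(\<gamma>\<omega> + \<delta>))\<close>,
  a composition of affine maps \<open>\<omega> \<mapsto> c\<omega> + b\<close> with \<open>c > 0\<close> and of \<open>\<omega> \<mapsto> -1/\<omega>\<close>
  (for \<open>\<gamma> = 0\<close> it is affine with positive slope \<open>\<alpha>\<^sup>2\<close>), so it suffices that these maps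
  preserve the index. A positive affine map changes neither the poles nor the direction in which
  the function passes through them. For \<open>R = f\<^sub>1/f\<^sub>0\<close> and \<open>-1/R = -f\<^sub>0/f\<^sub>1\<close>, every real root
  \<open>x\<close> of odd order of \<open>f\<^sub>1 f\<^sub>0\<close> is an odd pole of exactly one of the two, and the difference
  of their local indices at \<open>x\<close> is the sign of \<open>f\<^sub>1 f\<^sub>0\<close> just to the right of \<open>x\<close>, i.e. half
  the jump of \<open>sgn (f\<^sub>1 f\<^sub>0)\<close> at \<open>x\<close>. These half-jumps telescope to half the difference of
  the signs of \<open>f\<^sub>1 f\<^sub>0\<close> at \<open>+\<infinity>\<close> and \<open>-\<infinity>\<close>, which is exactly compensated by the
  indices at infinity.\<close>

section \<open>Root multiplicities and signs of real polynomials\<close>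

lemma order_decomp_nonroot:
  fixes p :: "'a::idom poly"
  assumes "p \<noteq> 0"
  obtains q where "p = [:-x, 1:] ^ order x p * q" and "poly q x \<noteq> 0"
  using order_decomp[OF assms, of x] by (auto simp: poly_eq_0_iff_dvd)

lemma order_linear_power_mult:
  fixes q :: "'a::idom poly"
  assumes "poly q x \<noteq> 0"
  shows "order x ([:-x, 1:] ^ k * q) = k"
  using assms by (subst order_mult) (auto simp: order_power_n_n order_0I)

lemma eventually_poly_nonzero_at:
  fixes p :: "real poly"
  assumes "p \<noteq> 0"
  shows "eventually (\<lambda>t. poly p t \<noteq> 0) (at x)"
proof -
  obtain q where p: "p = [:-x, 1:] ^ order x p * q" and qx: "poly q x \<noteq> 0"
    using order_decomp_nonroot[OF assms] .
  have "((\<lambda>t. poly q t) \<longlongrightarrow> poly q x) (at x)"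
    by (intro tendsto_intros)
  then have "eventually (\<lambda>t. poly q t \<noteq> 0) (at x)"
    using qx by (rule tendsto_imp_eventually_ne)
  moreover have "eventually (\<lambda>t. t \<noteq> x) (at x)"
    by (simp add: eventually_at_filter)
  ultimately show ?thesis
    by eventually_elim (subst p, simp add: poly_power)
qed

lemma eventually_sgn_poly_at_top:
  fixes p :: "real poly"
  assumes "p \<noteq> 0"
  shows "eventually (\<lambda>t. sgn (poly p t) = sgn (lead_coeff p)) at_top"
proof -
  have pos: "eventually (\<lambda>t. poly r t > 0) at_top" if r: "lead_coeff r > 0" for r :: "real poly"
  proof -
    obtain n where n: "\<forall>t\<ge>n. poly r t \<ge> lead_coeff r"
      using poly_pinfty_gt_lc[OF r] by blast
    show ?thesis
      using eventually_ge_at_top[of n] by eventually_elim (use n r in fastforce)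
  qed
  show ?thesis
  proof (cases "lead_coeff p > 0")
    case True
    from pos[OF True] show ?thesis
      by eventually_elim (use True in simp)
  next
    case False
    then have "lead_coeff p < 0"
      using assms by (simp add: not_less less_le)
    with pos[of "-p"] show ?thesis
      by (auto simp: lead_coeff_minus elim: eventually_mono)
  qed
qed

lemma eventually_sgn_poly_at_bot:
  fixes p :: "real poly"
  assumes "p \<noteq> 0"
  shows "eventually (\<lambda>t. sgn (poly p t) = (-1) ^ degree p * sgn (lead_coeff p)) at_bot"
proof -
  define p' where "p' = pcompose p [:0, -1:]"
  have lc: "lead_coeff p' = (-1) ^ degree p * lead_coeff p"
    unfolding p'_def by (subst lead_coeff_comp) auto
  have "sgn ((-1::real) ^ degree p) = (-1) ^ degree p"
    by (cases "even (degree p)") auto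
  moreover have "p' \<noteq> 0"
    using assms lc by auto
  ultimately have "eventually (\<lambda>t. sgn (poly p' t) = (-1) ^ degree p * sgn (lead_coeff p)) at_top"
    using eventually_sgn_poly_at_top[of p'] by (simp add: lc sgn_mult)
  then have "eventually (\<lambda>t. sgn (poly p (-t)) = (-1) ^ degree p * sgn (lead_coeff p)) at_top"
    by (simp add: p'_def poly_pcompose)
  then show ?thesis
    by (simp add: at_bot_mirror eventually_filtermap)
qed

lemma eventually_poly_nonzero_at_infinity:
  fixes p :: "real poly"
  assumes "p \<noteq> 0"
  shows "eventually (\<lambda>t. poly p t \<noteq> 0) at_top" and "eventually (\<lambda>t. poly p t \<noteq> 0) at_bot"
  using eventually_sgn_poly_at_top[OF assms] eventually_sgn_poly_at_bot[OF assms] assms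
  by (auto elim!: eventually_mono simp: sgn_0_0)

lemma sgn_poly_beyond_roots:
  fixes p :: "real poly"
  assumes "p \<noteq> 0" and "\<And>t. t \<ge> a \<Longrightarrow> poly p t \<noteq> 0"
  shows "sgn (poly p a) = sgn (lead_coeff p)"
proof (rule ccontr)
  assume ne: "sgn (poly p a) \<noteq> sgn (lead_coeff p)"
  obtain b where "b > a" and b: "sgn (poly p b) = sgn (lead_coeff p)"
    using eventually_conj[OF eventually_sgn_poly_at_top[OF assms(1)] eventually_gt_at_top[of a]]
    by (auto dest: eventually_happens)
  have "poly p a * poly p b < 0"
    using ne b assms(2)[of a] assms(2)[of b] \<open>b > a\<close>
    by (auto simp: sgn_if mult_less_0_iff split: if_splits)
  with poly_IVT[OF \<open>b > a\<close>] assms(2) show False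
    by force
qed

lemma odd_degree_poly_has_root:
  fixes p :: "real poly"
  assumes "odd (degree p)"
  obtains x where "poly p x = 0"
proof -
  have p: "p \<noteq> 0"
    using assms by auto
  obtain a b where "a < b" and a: "sgn (poly p a) = - sgn (lead_coeff p)"
    and b: "sgn (poly p b) = sgn (lead_coeff p)"
  proof -
    obtain a where a: "sgn (poly p a) = - sgn (lead_coeff p)"
      using eventually_happens[OF eventually_sgn_poly_at_bot[OF p]] assms by auto
    obtain b where "b > a" and b: "sgn (poly p b) = sgn (lead_coeff p)"
      using eventually_conj[OF eventually_sgn_poly_at_top[OF p] eventually_gt_at_top[of a]]
      by (auto dest: eventually_happens)
    show ?thesis
      by (rule that[OF \<open>b > a\<close> a b])
  qed
  then have "poly p a * poly p b < 0"
    using p by (auto simp: sgn_if mult_less_0_iff split: if_splits)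
  with poly_IVT[OF \<open>a < b\<close>] that show ?thesis
    by blast
qed

section \<open>Sign changes at roots of odd order\<close>

text \<open>For \<open>p \<noteq> 0\<close>, \<open>cofactor_sign p x\<close> is the sign of \<open>p\<close> immediately to the right of \<open>x\<close>.\<close>

definition cofactor_sign :: "real poly \<Rightarrow> real \<Rightarrow> int" where
  "cofactor_sign p x = (if poly (p div [:-x, 1:] ^ order x p) x > 0 then 1 else -1)"

definition root_sign_sum :: "real poly \<Rightarrow> int" where
  "root_sign_sum p = (\<Sum>x\<in>{x. poly p x = 0}. if odd (order x p) then cofactor_sign p x else 0)"

lemma cofactor_sign_linear_power_mult:
  assumes "poly q x \<noteq> 0"
  shows "cofactor_sign ([:-x, 1:] ^ k * q) x = (if poly q x > 0 then 1 else -1)"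
  using assms by (simp add: cofactor_sign_def order_linear_power_mult)

lemma cofactor_sign_uminus:
  assumes "p \<noteq> 0"
  shows "cofactor_sign (-p) x = - cofactor_sign p x"
proof -
  obtain q where p: "p = [:-x, 1:] ^ order x p * q" and qx: "poly q x \<noteq> 0"
    using order_decomp_nonroot[OF assms] .
  have mp: "-p = [:-x, 1:] ^ order x p * (-q)"
    by (subst p) simp
  have "cofactor_sign (-p) x = (if poly (-q) x > 0 then 1 else -1)"
    by (subst mp) (rule cofactor_sign_linear_power_mult, use qx in simp)
  moreover have "cofactor_sign p x = (if poly q x > 0 then 1 else -1)"
    by (subst p) (rule cofactor_sign_linear_power_mult[OF qx])
  ultimately show ?thesis
    using qx by auto
qed

lemma cofactor_sign_linear_power_mult_left_of_root:
  assumes "x < a" and "q \<noteq> 0"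
  shows "order x ([:-a, 1:] ^ k * q) = order x q"
    and "cofactor_sign ([:-a, 1:] ^ k * q) x = (-1) ^ k * cofactor_sign q x"
proof -
  obtain r where q: "q = [:-x, 1:] ^ order x q * r" and rx: "poly r x \<noteq> 0"
    using order_decomp_nonroot[OF assms(2)] .
  have p: "[:-a, 1:] ^ k * q = [:-x, 1:] ^ order x q * ([:-a, 1:] ^ k * r)"
    by (subst q) (simp add: mult_ac)
  have ar: "poly ([:-a, 1:] ^ k * r) x = (x - a) ^ k * poly r x"
    by (simp add: poly_power)
  have nz: "poly ([:-a, 1:] ^ k * r) x \<noteq> 0"
    using assms(1) rx by (simp add: ar)
  show "order x ([:-a, 1:] ^ k * q) = order x q"
    unfolding p by (rule order_linear_power_mult[OF nz])
  have "(if (x - a) ^ k * poly r x > 0 then 1 else -1) = (-1) ^ k * (if poly r x > 0 then 1 else (-1::int))"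
    using assms(1) rx
    by (cases "even k") (auto simp: zero_less_mult_iff zero_less_power_eq power_less_zero_eq)
  moreover have "cofactor_sign q x = (if poly r x > 0 then 1 else -1)"
    by (subst q) (rule cofactor_sign_linear_power_mult[OF rx])
  ultimately show "cofactor_sign ([:-a, 1:] ^ k * q) x = (-1) ^ k * cofactor_sign q x"
    unfolding p cofactor_sign_linear_power_mult[OF nz] by (simp add: ar)
qed

lemma root_sign_sum_linear_power_mult:
  assumes "q \<noteq> 0" and "0 < k" and "poly q a \<noteq> 0" and beyond: "\<And>x. poly q x = 0 \<Longrightarrow> x < a"
  shows "root_sign_sum ([:-a, 1:] ^ k * q)
    = (if odd k then (if lead_coeff q > 0 then 1 else -1) else 0) + (-1) ^ k * root_sign_sum q"
proof -
  define p where "p = [:-a, 1:] ^ k * q"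
  define Z where "Z = {x. poly q x = 0}"
  have roots: "{x. poly p x = 0} = insert a Z" and "a \<notin> Z" and "finite Z"
    using assms poly_roots_finite[OF assms(1)] by (auto simp: p_def Z_def poly_power)
  have "sgn (poly q a) = sgn (lead_coeff q)"
    using sgn_poly_beyond_roots[OF assms(1), of a] beyond by (meson not_le)
  then have "cofactor_sign p a = (if lead_coeff q > 0 then 1 else -1)"
    using cofactor_sign_linear_power_mult[OF assms(3), of k] assms(3)
    by (auto simp: p_def sgn_if split: if_splits)
  moreover have "order a p = k"
    using order_linear_power_mult[OF assms(3)] by (simp add: p_def)
  moreover have "(\<Sum>x\<in>Z. if odd (order x p) then cofactor_sign p x else 0)
      = (-1) ^ k * root_sign_sum q"
    unfolding root_sign_sum_def sum_distrib_left Z_def[symmetric]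
    using cofactor_sign_linear_power_mult_left_of_root[OF beyond assms(1)]
    by (intro sum.cong) (auto simp: p_def Z_def)
  ultimately show ?thesis
    unfolding p_def[symmetric] root_sign_sum_def roots
    using \<open>a \<notin> Z\<close> \<open>finite Z\<close> by simp
qed

lemma largest_root_decomp:
  fixes p :: "real poly"
  assumes "p \<noteq> 0" and "{x. poly p x = 0} \<noteq> {}"
  obtains a q where "p = [:-a, 1:] ^ order a p * q" and "0 < order a p" and "poly q a \<noteq> 0"
    and "\<And>x. poly q x = 0 \<Longrightarrow> x < a"
proof -
  define a where "a = Max {x. poly p x = 0}"
  have "poly p a = 0" and max: "\<And>x. poly p x = 0 \<Longrightarrow> x \<le> a"
    unfolding a_def using Max_in Max_ge poly_roots_finite[OF assms(1)] assms(2) by auto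
  obtain q where p: "p = [:-a, 1:] ^ order a p * q" and qa: "poly q a \<noteq> 0"
    using order_decomp_nonroot[OF assms(1)] .
  have "x < a" if "poly q x = 0" for x
  proof -
    have "poly p x = 0"
      by (subst p) (simp add: that)
    then show ?thesis
      using max[of x] that qa by (metis order_le_less)
  qed
  moreover have "0 < order a p"
    using assms(1) \<open>poly p a = 0\<close> by (simp add: order_gt_0_iff)
  ultimately show ?thesis
    using that p qa by blast
qed

lemma root_sign_sum_eq:
  assumes "p \<noteq> 0"
  shows "root_sign_sum p = (if odd (degree p) then (if lead_coeff p > 0 then 1 else -1) else 0)"
  using assms
proof (induction "card {x. poly p x = 0}" arbitrary: p)
  case 0
  then have "{x. poly p x = 0} = {}"
    using poly_roots_finite by fastforce
  then show ?case
    using odd_degree_poly_has_root[of p] by (auto simp: root_sign_sum_def)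
next
  case (Suc n)
  then have "{x. poly p x = 0} \<noteq> {}"
    by (metis card.empty nat.distinct(1))
  then obtain a q where p: "p = [:-a, 1:] ^ order a p * q" and k: "0 < order a p"
    and qa: "poly q a \<noteq> 0" and beyond: "\<And>x. poly q x = 0 \<Longrightarrow> x < a"
    using largest_root_decomp[OF Suc.prems] by blast
  have q0: "q \<noteq> 0"
    using qa by auto
  have "poly p t = (t - a) ^ order a p * poly q t" for t
    by (subst p) (simp add: poly_power)
  then have "{x. poly p x = 0} = insert a {x. poly q x = 0}"
    using k by auto
  then have "card {x. poly q x = 0} = n"
    using Suc.hyps(2) qa poly_roots_finite[OF q0] by auto
  then have IH: "root_sign_sum q = (if odd (degree q) then (if lead_coeff q > 0 then 1 else -1) else 0)"
    using Suc.hyps(1) q0 by blast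
  have deg: "degree p = order a p + degree q"
    using arg_cong[OF p, of degree] q0 by (simp add: degree_mult_eq degree_linear_power)
  have lc: "lead_coeff p = lead_coeff q"
    using arg_cong[OF p, of lead_coeff] by (simp add: lead_coeff_mult lead_coeff_power)
  have "root_sign_sum p
      = (if odd (order a p) then (if lead_coeff q > 0 then 1 else -1) else 0)
        + (-1) ^ order a p * root_sign_sum q"
    by (subst p) (rule root_sign_sum_linear_power_mult[OF q0 k qa beyond])
  then show ?case
    unfolding lc unfolding IH deg by (cases "even (order a p)"; cases "even (degree q)") simp_all
qed

section \<open>Local indices\<close>

lemma filterlim_inverse_odd_power:
  fixes x :: real
  assumes "odd m"
  shows "filterlim (\<lambda>t. inverse ((t - x) ^ m)) at_bot (at_left x)"
    and "filterlim (\<lambda>t. inverse ((t - x) ^ m)) at_top (at_right x)"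
proof -
  have "((\<lambda>t. (t - x) ^ m) \<longlongrightarrow> 0) (at x)"
    using odd_pos[OF assms] by (auto intro!: tendsto_eq_intros)
  then have "((\<lambda>t. (t - x) ^ m) \<longlongrightarrow> 0) (at_left x)" and "((\<lambda>t. (t - x) ^ m) \<longlongrightarrow> 0) (at_right x)"
    by (simp_all add: filterlim_at_split)
  then show "filterlim (\<lambda>t. inverse ((t - x) ^ m)) at_bot (at_left x)"
    and "filterlim (\<lambda>t. inverse ((t - x) ^ m)) at_top (at_right x)"
    using assms
    by (auto intro!: filterlim_inverse_at_top filterlim_inverse_at_bot
        simp: eventually_at_filter power_less_zero_eq)
qed

lemma filterlim_ratfun_at_odd_pole:
  fixes g1 g0 q1 q0 :: "real poly"
  assumes g1: "g1 = [:-x, 1:] ^ a * q1" and g0: "g0 = [:-x, 1:] ^ b * q0"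
    and q1: "poly q1 x \<noteq> 0" and q0: "poly q0 x \<noteq> 0" and "a < b" and "odd (b - a)"
  shows "poly q1 x * poly q0 x > 0 \<Longrightarrow>
      filterlim (ratfun g1 g0) at_bot (at_left x) \<and> filterlim (ratfun g1 g0) at_top (at_right x)"
    and "poly q1 x * poly q0 x < 0 \<Longrightarrow>
      filterlim (ratfun g1 g0) at_top (at_left x) \<and> filterlim (ratfun g1 g0) at_bot (at_right x)"
proof -
  define m where "m = b - a"
  define f where "f t = poly q1 t / poly q0 t" for t
  have "odd m"
    using assms(6) by (simp add: m_def)
  have eq: "ratfun g1 g0 t = f t * inverse ((t - x) ^ m)" if "t \<noteq> x" for t
    using that assms(5) unfolding ratfun_def f_def g1 g0 m_def
    by (cases "poly q0 t = 0") (simp_all add: poly_power power_diff field_simps)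
  have eq_left: "filterlim (ratfun g1 g0) F (at_left x) \<longleftrightarrow>
      filterlim (\<lambda>t. f t * inverse ((t - x) ^ m)) F (at_left x)" for F
    by (rule filterlim_cong) (auto simp: eventually_at_filter eq)
  have eq_right: "filterlim (ratfun g1 g0) F (at_right x) \<longleftrightarrow>
      filterlim (\<lambda>t. f t * inverse ((t - x) ^ m)) F (at_right x)" for F
    by (rule filterlim_cong) (auto simp: eventually_at_filter eq)
  have "(f \<longlongrightarrow> f x) (at x)"
    using q0 unfolding f_def by (intro tendsto_intros) auto
  then have f_left: "(f \<longlongrightarrow> f x) (at_left x)" and f_right: "(f \<longlongrightarrow> f x) (at_right x)"
    by (simp_all add: filterlim_at_split)
  note left = filterlim_inverse_odd_power(1)[OF \<open>odd m\<close>, of x]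
    and right = filterlim_inverse_odd_power(2)[OF \<open>odd m\<close>, of x]
  show "filterlim (ratfun g1 g0) at_bot (at_left x) \<and> filterlim (ratfun g1 g0) at_top (at_right x)"
    if "poly q1 x * poly q0 x > 0"
  proof -
    have "f x > 0"
      using that by (simp add: f_def zero_less_mult_iff zero_less_divide_iff)
    then show ?thesis
      unfolding eq_left eq_right
      using filterlim_tendsto_pos_mult_at_bot[OF f_left _ left]
        filterlim_tendsto_pos_mult_at_top[OF f_right _ right] by blast
  qed
  show "filterlim (ratfun g1 g0) at_top (at_left x) \<and> filterlim (ratfun g1 g0) at_bot (at_right x)"
    if "poly q1 x * poly q0 x < 0"
  proof -
    have "f x < 0"
      using that by (simp add: f_def mult_less_0_iff divide_less_0_iff)
    then show ?thesis
      unfolding eq_left eq_right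
      using filterlim_tendsto_neg_mult_at_top_iff[OF f_left, of "\<lambda>t. inverse ((t - x) ^ m)"] left
        filterlim_tendsto_neg_mult_at_bot[OF f_right _ right] by blast
  qed
qed

lemma ind_at_eq_cofactor_sign:
  assumes "g0 \<noteq> 0"
  shows "ind_at g1 g0 x = (if odd_real_pole g1 g0 x then cofactor_sign (g1 * g0) x else 0)"
proof (cases "odd_real_pole g1 g0 x")
  case pole: True
  then have "g1 \<noteq> 0" and lt: "order x g1 < order x g0" and odd: "odd (order x g0 - order x g1)"
    by (auto simp: odd_real_pole_def)
  obtain q1 where g1: "g1 = [:-x, 1:] ^ order x g1 * q1" and q1: "poly q1 x \<noteq> 0"
    using order_decomp_nonroot[OF \<open>g1 \<noteq> 0\<close>] .
  obtain q0 where g0: "g0 = [:-x, 1:] ^ order x g0 * q0" and q0: "poly q0 x \<noteq> 0"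
    using order_decomp_nonroot[OF assms] .
  have "g1 * g0 = [:-x, 1:] ^ (order x g1 + order x g0) * (q1 * q0)"
    by (subst g1, subst g0) (simp add: power_add mult_ac)
  then have sign: "cofactor_sign (g1 * g0) x = (if poly q1 x * poly q0 x > 0 then 1 else -1)"
    using cofactor_sign_linear_power_mult[of "q1 * q0" x] q1 q0 by simp
  note lim = filterlim_ratfun_at_odd_pole[OF g1 g0 q1 q0 lt odd]
  consider "poly q1 x * poly q0 x > 0" | "poly q1 x * poly q0 x < 0"
    using q1 q0 by (metis linorder_neqE_linordered_idom mult_eq_0_iff)
  then show ?thesis
    using pole lim sign by cases (auto simp: ind_at_def)
qed (simp add: ind_at_def)

lemma filterlim_at_bot_to_left:
  fixes f :: "real \<Rightarrow> 'a"
  shows "filterlim f F at_bot \<longleftrightarrow> filterlim (\<lambda>u. f (inverse u)) F (at_left 0)"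
  unfolding filterlim_at_bot_mirror filterlim_at_top_to_right filterlim_at_left_to_right
  by simp

lemma ratfun_inverse_eq_reflect:
  assumes "degree g0 \<le> degree g1" and "u \<noteq> 0"
  shows "ratfun g1 g0 (inverse u)
    = ratfun (reflect_poly g1) ([:0, 1:] ^ (degree g1 - degree g0) * reflect_poly g0) u"
proof -
  have "poly (reflect_poly g1) u = u ^ (degree g1 - degree g0) * u ^ degree g0 * poly g1 (inverse u)"
    using assms by (simp add: poly_reflect_poly_nz power_add[symmetric])
  moreover have "poly ([:0, 1:] ^ (degree g1 - degree g0) * reflect_poly g0) u
      = u ^ (degree g1 - degree g0) * (u ^ degree g0 * poly g0 (inverse u))"
    using assms by (simp add: poly_reflect_poly_nz poly_power)
  ultimately show ?thesis
    unfolding ratfun_def using assms(2) by (simp add: field_simps)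
qed

lemma ind_inf_eq_lead_coeff_sign:
  assumes g1: "g1 \<noteq> 0" and g0: "g0 \<noteq> 0"
  shows "ind_inf g1 g0 = (if degree g0 < degree g1 \<and> odd (degree g1 - degree g0)
      then (if lead_coeff g1 * lead_coeff g0 > 0 then -1 else 1) else 0)"
proof (cases "degree g0 < degree g1 \<and> odd (degree g1 - degree g0)")
  case pole: True
  define m where "m = degree g1 - degree g0"
  define G0 where "G0 = [:-0, 1:] ^ m * reflect_poly g0"
  have eq: "ratfun g1 g0 (inverse u) = ratfun (reflect_poly g1) G0 u" if "u \<noteq> 0" for u
    using ratfun_inverse_eq_reflect[OF _ that, of g0 g1] pole by (simp add: G0_def m_def)
  have top: "filterlim (ratfun g1 g0) F at_top \<longleftrightarrow> filterlim (ratfun (reflect_poly g1) G0) F (at_right 0)" for F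
    unfolding filterlim_at_top_to_right
    by (rule filterlim_cong) (auto simp: eventually_at_filter eq)
  have bot: "filterlim (ratfun g1 g0) F at_bot \<longleftrightarrow> filterlim (ratfun (reflect_poly g1) G0) F (at_left 0)" for F
    unfolding filterlim_at_bot_to_left
    by (rule filterlim_cong) (auto simp: eventually_at_filter eq)
  have "reflect_poly g1 = [:-0, 1:] ^ 0 * reflect_poly g1" and "0 < m" and "odd (m - 0)"
    using pole by (simp_all add: m_def)
  moreover have "poly (reflect_poly g1) 0 \<noteq> 0" and "poly (reflect_poly g0) 0 \<noteq> 0"
    using g1 g0 by simp_all
  ultimately have lim_pos: "lead_coeff g1 * lead_coeff g0 > 0 \<Longrightarrow>
      filterlim (ratfun g1 g0) at_bot at_bot \<and> filterlim (ratfun g1 g0) at_top at_top"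
    and lim_neg: "lead_coeff g1 * lead_coeff g0 < 0 \<Longrightarrow>
      filterlim (ratfun g1 g0) at_top at_bot \<and> filterlim (ratfun g1 g0) at_bot at_top"
    unfolding top bot
    using filterlim_ratfun_at_odd_pole[of "reflect_poly g1" 0 0 "reflect_poly g1" G0 m "reflect_poly g0"]
    by (simp_all only: G0_def poly_reflect_poly_0 simp_thms)
  consider "lead_coeff g1 * lead_coeff g0 > 0" | "lead_coeff g1 * lead_coeff g0 < 0"
    using g1 g0 by (metis leading_coeff_0_iff linorder_neqE_linordered_idom mult_eq_0_iff)
  then show ?thesis
  proof cases
    case 1
    then have "\<not> filterlim (ratfun g1 g0) at_bot at_top"
      using lim_pos by (auto elim: filterlim_at_top_at_bot)
    then show ?thesis
      using 1 pole lim_pos unfolding ind_inf_def by simp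
  next
    case 2
    then show ?thesis
      using pole lim_neg unfolding ind_inf_def by simp
  qed
qed (simp add: ind_inf_def)

section \<open>Invariance under \<open>\<omega> \<mapsto> -1/\<omega>\<close>\<close>

lemma ind_at_diff_reciprocal:
  assumes g1: "g1 \<noteq> 0" and g0: "g0 \<noteq> 0"
  shows "ind_at g1 g0 x - ind_at (-g0) g1 x
    = (if odd (order x (g1 * g0)) then cofactor_sign (g1 * g0) x else 0)"
proof -
  have "order x (g1 * g0) = order x g1 + order x g0"
    using g1 g0 by (simp add: order_mult)
  moreover have "cofactor_sign (-g0 * g1) x = - cofactor_sign (g1 * g0) x"
    using cofactor_sign_uminus[of "g1 * g0" x] g1 g0 by (simp add: mult.commute)
  ultimately show ?thesis
    using g1 g0 unfolding ind_at_eq_cofactor_sign[OF g0] ind_at_eq_cofactor_sign[OF g1] odd_real_pole_def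
    by (cases "order x g1 < order x g0"; cases "order x g0 < order x g1") auto
qed

lemma ind_line_eq_sum_superset:
  assumes "finite Z" and "{x. poly g0 x = 0} \<subseteq> Z"
  shows "ind_line g1 g0 = (\<Sum>x\<in>Z. ind_at g1 g0 x)"
  unfolding ind_line_def
  by (rule sum.mono_neutral_left[OF assms]) (auto simp: ind_at_def odd_real_pole_def order_0I)

lemma ind_line_diff_reciprocal:
  assumes g1: "g1 \<noteq> 0" and g0: "g0 \<noteq> 0"
  shows "ind_line g1 g0 - ind_line (-g0) g1 = root_sign_sum (g1 * g0)"
proof -
  define Z where "Z = {x. poly (g1 * g0) x = 0}"
  have "finite Z"
    using g1 g0 by (simp add: Z_def poly_roots_finite)
  then have "ind_line g1 g0 - ind_line (-g0) g1 = (\<Sum>x\<in>Z. ind_at g1 g0 x - ind_at (-g0) g1 x)"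
    by (simp add: ind_line_eq_sum_superset[of Z] Z_def sum_subtractf subset_iff)
  also have "\<dots> = root_sign_sum (g1 * g0)"
    unfolding root_sign_sum_def Z_def ind_at_diff_reciprocal[OF g1 g0] ..
  finally show ?thesis .
qed

lemma ind_PR_reciprocal:
  assumes g1: "g1 \<noteq> 0" and g0: "g0 \<noteq> 0"
  shows "ind_PR (-g0) g1 = ind_PR g1 g0"
proof -
  have "lead_coeff (g1 * g0) = lead_coeff g1 * lead_coeff g0"
    by (rule lead_coeff_mult)
  moreover have "degree (g1 * g0) = degree g1 + degree g0"
    using g1 g0 by (rule degree_mult_eq)
  ultimately have "ind_line g1 g0 - ind_line (-g0) g1 = (if odd (degree g1 + degree g0)
      then (if lead_coeff g1 * lead_coeff g0 > 0 then 1 else -1) else 0)"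
    using ind_line_diff_reciprocal[OF g1 g0] root_sign_sum_eq[of "g1 * g0"] g1 g0 by simp
  moreover have "ind_inf (-g0) g1 = (if degree g1 < degree g0 \<and> odd (degree g0 - degree g1)
      then (if lead_coeff g1 * lead_coeff g0 > 0 then 1 else -1) else 0)"
    using ind_inf_eq_lead_coeff_sign[of "-g0" g1] g1 g0 by (auto simp: lead_coeff_minus mult_ac)
  ultimately show ?thesis
    unfolding ind_PR_def ind_inf_eq_lead_coeff_sign[OF g1 g0]
    by (cases "degree g0 < degree g1"; cases "degree g1 < degree g0") auto
qed

section \<open>Invariance under \<open>\<omega> \<mapsto> c\<omega> + b\<close> with \<open>c > 0\<close>\<close>

lemma order_affine_combination:
  fixes g1 g0 :: "'a::field poly"
  assumes g1: "g1 \<noteq> 0" and lt: "order x g1 < order x g0" and "c \<noteq> 0"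
  shows "smult c g1 + smult b g0 \<noteq> 0" and "order x (smult c g1 + smult b g0) = order x g1"
proof -
  define d where "d = [:-x, 1:] ^ order x g1"
  define G where "G = smult c g1 + smult b g0"
  have "d * [:-x, 1:] dvd g0"
    using lt unfolding d_def by (metis Suc_leI dvd_trans le_imp_power_dvd order_1 power_Suc2)
  then have d_g0: "d dvd g0" and d'_g0: "d * [:-x, 1:] dvd smult b g0"
    by (rule dvd_mult_left, rule dvd_smult)
  have "d dvd G"
    unfolding G_def d_def using d_g0 order_1[of x g1] by (simp add: d_def dvd_smult)
  moreover have not_dvd: "\<not> d * [:-x, 1:] dvd G"
  proof
    assume "d * [:-x, 1:] dvd G"
    then have "d * [:-x, 1:] dvd G - smult b g0"
      using d'_g0 by (rule dvd_diff)
    then have "d * [:-x, 1:] dvd g1"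
      using \<open>c \<noteq> 0\<close> by (simp add: G_def dvd_smult_iff)
    with order_2[OF g1] show False
      by (simp add: d_def mult.commute)
  qed
  ultimately have "order x G = order x g1"
    unfolding d_def by (intro order_unique_lemma) (simp_all add: mult.commute)
  moreover have "G \<noteq> 0"
    using not_dvd by auto
  ultimately show "smult c g1 + smult b g0 \<noteq> 0" and "order x (smult c g1 + smult b g0) = order x g1"
    by (simp_all add: G_def)
qed

lemma smult_affine_inverse:
  fixes g1 g0 :: "'a::field poly"
  assumes "c \<noteq> 0"
  shows "g1 = smult (1 / c) (smult c g1 + smult b g0) + smult (- b / c) g0"
  using assms by (intro poly_eqI) (simp add: field_simps)

lemma odd_real_pole_affine:
  assumes "c \<noteq> 0"
  shows "odd_real_pole (smult c g1 + smult b g0) g0 x \<longleftrightarrow> odd_real_pole g1 g0 x"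
proof
  show "odd_real_pole (smult c g1 + smult b g0) g0 x" if "odd_real_pole g1 g0 x"
    using that order_affine_combination[of g1 x g0 c b] assms by (auto simp: odd_real_pole_def)
next
  define G where "G = smult c g1 + smult b g0"
  assume "odd_real_pole G g0 x"
  moreover have "1 / c \<noteq> 0"
    using assms by simp
  ultimately show "odd_real_pole g1 g0 x"
    using order_affine_combination[of G x g0 "1 / c" "- b / c"] smult_affine_inverse[OF assms, of g1 b]
    by (auto simp: odd_real_pole_def G_def)
qed

lemma degree_affine_combination:
  fixes g1 g0 :: "'a::field poly"
  assumes "c \<noteq> 0"
  shows "degree g0 < degree (smult c g1 + smult b g0) \<longleftrightarrow> degree g0 < degree g1"
    and "degree g0 < degree g1 \<Longrightarrow> degree (smult c g1 + smult b g0) = degree g1"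
proof -
  show eq: "degree (smult c g1 + smult b g0) = degree g1" if "degree g0 < degree g1"
    using that assms by (subst degree_add_eq_left) auto
  have "degree (smult c g1 + smult b g0) \<le> degree g0" if "degree g1 \<le> degree g0"
    using that degree_add_le[of "smult c g1" "degree g0" "smult b g0"] by simp
  then show "degree g0 < degree (smult c g1 + smult b g0) \<longleftrightarrow> degree g0 < degree g1"
    using eq by fastforce
qed

lemma filterlim_ratfun_affine:
  assumes "c > 0" and "eventually (\<lambda>t. poly g0 t \<noteq> 0) F"
  shows "filterlim (ratfun (smult c g1 + smult b g0) g0) at_top F \<longleftrightarrow> filterlim (ratfun g1 g0) at_top F"
    and "filterlim (ratfun (smult c g1 + smult b g0) g0) at_bot F \<longleftrightarrow> filterlim (ratfun g1 g0) at_bot F"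
proof -
  have "eventually (\<lambda>t. b + c * ratfun g1 g0 t = ratfun (smult c g1 + smult b g0) g0 t) F"
    using assms(2) by eventually_elim (simp add: ratfun_def field_simps)
  then have cong: "filterlim (ratfun (smult c g1 + smult b g0) g0) G F
      \<longleftrightarrow> filterlim (\<lambda>t. b + c * ratfun g1 g0 t) G F" for G
    by (rule filterlim_cong[OF refl refl, symmetric])
  have b: "((\<lambda>_. b) \<longlongrightarrow> b) F" and c: "((\<lambda>_. c) \<longlongrightarrow> c) F"
    by simp_all
  show "filterlim (ratfun (smult c g1 + smult b g0) g0) at_top F \<longleftrightarrow> filterlim (ratfun g1 g0) at_top F"
    unfolding cong filterlim_tendsto_add_at_top_iff[OF b]
    by (rule filterlim_tendsto_pos_mult_at_top_iff[OF c assms(1)])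
  show "filterlim (ratfun (smult c g1 + smult b g0) g0) at_bot F \<longleftrightarrow> filterlim (ratfun g1 g0) at_bot F"
    unfolding cong filterlim_tendsto_add_at_bot_iff[OF b]
    by (rule filterlim_tendsto_pos_mult_at_bot_iff[OF c assms(1)])
qed

lemma ind_PR_affine:
  assumes "c > 0" and g0: "g0 \<noteq> 0"
  shows "ind_PR (smult c g1 + smult b g0) g0 = ind_PR g1 g0"
proof -
  have c: "c \<noteq> 0"
    using assms(1) by simp
  have "eventually (\<lambda>t. poly g0 t \<noteq> 0) (at_left x)" "eventually (\<lambda>t. poly g0 t \<noteq> 0) (at_right x)" for x
    using eventually_poly_nonzero_at[OF g0, of x] by (simp_all add: eventually_at_split)
  note lim = filterlim_ratfun_affine[OF assms(1) this(1)] filterlim_ratfun_affine[OF assms(1) this(2)]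
    filterlim_ratfun_affine[OF assms(1) eventually_poly_nonzero_at_infinity(1)[OF g0]]
    filterlim_ratfun_affine[OF assms(1) eventually_poly_nonzero_at_infinity(2)[OF g0]]
  have "ind_at (smult c g1 + smult b g0) g0 x = ind_at g1 g0 x" for x
    unfolding ind_at_def odd_real_pole_affine[OF c] lim ..
  then have "ind_line (smult c g1 + smult b g0) g0 = ind_line g1 g0"
    by (simp add: ind_line_def)
  moreover have "ind_inf (smult c g1 + smult b g0) g0 = ind_inf g1 g0"
  proof (cases "degree g0 < degree g1")
    case True
    show ?thesis
      unfolding ind_inf_def degree_affine_combination(2)[OF c True] lim ..
  qed (simp add: ind_inf_def degree_affine_combination(1)[OF c])
  ultimately show ?thesis
    by (simp add: ind_PR_def)
qed

lemma ind_PR_smult: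
  assumes "c \<noteq> 0"
  shows "ind_PR (smult c g1) (smult c g0) = ind_PR g1 g0"
proof -
  have R: "ratfun (smult c g1) (smult c g0) = ratfun g1 g0"
    using assms by (simp add: ratfun_def fun_eq_iff)
  have "odd_real_pole (smult c g1) (smult c g0) x = odd_real_pole g1 g0 x" for x
    using assms by (simp add: odd_real_pole_def order_smult)
  then have "ind_at (smult c g1) (smult c g0) x = ind_at g1 g0 x" for x
    unfolding ind_at_def R by simp
  then show ?thesis
    using assms unfolding ind_PR_def ind_line_def ind_inf_def R by simp
qed

theorem theorem59:
  fixes \<alpha> \<beta> \<gamma> \<delta> :: real and f1 f0 :: "real poly"
  assumes "\<alpha> * \<delta> - \<beta> * \<gamma> = 1"
    and "f0 \<noteq> 0"
    and "smult \<gamma> f1 + smult \<delta> f0 \<noteq> 0"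
  shows "ind_PR (smult \<alpha> f1 + smult \<beta> f0) (smult \<gamma> f1 + smult \<delta> f0) = ind_PR f1 f0"
proof (cases "\<gamma> = 0")
  case True
  then have "\<alpha> \<noteq> 0" and "\<alpha> * \<delta> = 1"
    using assms(1) by auto
  have "ind_PR (smult \<alpha> f1 + smult \<beta> f0) (smult \<gamma> f1 + smult \<delta> f0)
      = ind_PR (smult \<alpha> (smult \<alpha> f1 + smult \<beta> f0)) (smult \<alpha> (smult \<gamma> f1 + smult \<delta> f0))"
    using ind_PR_smult[OF \<open>\<alpha> \<noteq> 0\<close>] by simp
  also have "\<dots> = ind_PR (smult (\<alpha> * \<alpha>) f1 + smult (\<alpha> * \<beta>) f0) f0"
    using True \<open>\<alpha> * \<delta> = 1\<close> by (simp add: smult_add_right)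
  also have "\<dots> = ind_PR f1 f0"
    using \<open>\<alpha> \<noteq> 0\<close> assms(2) not_real_square_gt_zero by (intro ind_PR_affine) blast+
  finally show ?thesis .
next
  case False
  define h where "h = smult \<gamma> (smult \<gamma> f1 + smult \<delta> f0)"
  have det: "\<alpha> * (\<delta> * t) = t + \<beta> * (\<gamma> * t)" for t
    using assms(1) by algebra
  have "h \<noteq> 0" and "\<gamma> * \<gamma> > 0"
    using False assms(3) by (simp add: h_def, metis not_real_square_gt_zero)
  have "ind_PR (smult \<alpha> f1 + smult \<beta> f0) (smult \<gamma> f1 + smult \<delta> f0)
      = ind_PR (smult \<gamma> (smult \<alpha> f1 + smult \<beta> f0)) h"
    unfolding h_def by (rule ind_PR_smult[OF False, symmetric])
  also have "smult \<gamma> (smult \<alpha> f1 + smult \<beta> f0) = smult 1 (-f0) + smult (\<alpha> / \<gamma>) h"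
    using False by (intro poly_eqI) (simp add: h_def field_simps det)
  also have "ind_PR \<dots> h = ind_PR (-f0) h"
    using \<open>h \<noteq> 0\<close> by (intro ind_PR_affine) simp_all
  also have "\<dots> = ind_PR h f0"
    using \<open>h \<noteq> 0\<close> assms(2) by (rule ind_PR_reciprocal)
  also have "h = smult (\<gamma> * \<gamma>) f1 + smult (\<gamma> * \<delta>) f0"
    by (simp add: h_def smult_add_right)
  also have "ind_PR \<dots> f0 = ind_PR f1 f0"
    using \<open>\<gamma> * \<gamma> > 0\<close> assms(2) by (rule ind_PR_affine)
  finally show ?thesis .
qed

end
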